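(* Let $\mathcal{H}$ be a real Hilbert space, $\Gamma\subseteq\mathbb{R}_{++}$ nonempty, $(T_\gamma)_{\gamma\in\Gamma}$ a family of operators on $\mathcal{H}$ with $\operatorname{Fix}T_\gamma\neq\emptyset$ for all $\gamma\in\Gamma$, and $(\mathcal{Q}_{\delta\leftarrow\gamma})_{\gamma,\delta\in\Gamma}$ fixed-point relocators for $(T_\gamma)_{\gamma\in\Gamma}$. Suppose that for each bounded subset $S\subseteq\bigcup_{\gamma\in\Gamma}(\operatorname{Fix}T_\gamma\times\{\gamma\})$ there exists $L>0$ with $\|\mathcal{Q}_{\delta\leftarrow\gamma}x-\mathcal{Q}_{\gamma\leftarrow\gamma}x\|\le L|\delta-\gamma|$ for all $\delta\in\Gamma$ and $(x,\gamma)\in S$, and that $(\gamma_n)_{n\in\mathbb{N}}\subseteq\Gamma$ converges $R$-linearly to $\gamma^*\in\Gamma$. Given $c_0\in\operatorname{Fix}T_{\gamma_0}$, define $c_{n+1}:=\mathcal{Q}_{\gamma_{n+1}\leftarrow\gamma_n}c_n$ for all $n\in\mathbb{N}$. Then $c_n\in\operatorname{Fix}T_{\gamma_n}$ for all $n\in\mathbb{N}$, and $(c_n)_{n\in\mathbb{N}}$ converges $R$-linearly to $\mathcal{Q}_{\gamma^*\leftarrow\gamma_0}c_0\in\operatorname{Fix}T_{\gamma^*}$.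
   Context: $\operatorname{Fix}T=\{x:Tx=x\}$. Fixed-point relocators: given a nonempty $\Gamma\subseteq\mathbb{R}_{++}$ and operators $(T_\gamma)_{\gamma\in\Gamma}$ on $\mathcal{H}$, a family of operators $(\mathcal{Q}_{\delta\leftarrow\gamma})_{\delta,\gamma\in\Gamma}$ on $\mathcal{H}$ is called fixed-point relocators for $(T_\gamma)$ (with Lipschitz constants $(\mathcal{L}_{\delta\leftarrow\gamma})$ in $[1,\infty)$) if: (a) for all $\gamma,\delta\in\Gamma$, the restriction of $\mathcal{Q}_{\delta\leftarrow\gamma}$ to $\operatorname{Fix}T_\gamma$ is a bijection onto $\operatorname{Fix}T_\delta$; (b) for all $\gamma\in\Gamma$ and $x\in\operatorname{Fix}T_\gamma$, $\delta\mapsto\mathcal{Q}_{\delta\leftarrow\gamma}x$ is continuous on $\Gamma$; (c) for all $\gamma,\delta,\epsilon\in\Gamma$ and $x\in\operatorname{Fix}T_\gamma$, $\mathcal{Q}_{\epsilon\leftarrow\delta}\mathcal{Q}_{\delta\leftarrow\gamma}x=\mathcal{Q}_{\epsilon\leftarrow\gamma}x$; (d) each $\mathcal{Q}_{\delta\leftarrow\gamma}$ is $\mathcal{L}_{\delta\leftarrow\gamma}$-Lipschitz. A sequence $(a_n)$ converges $R$-linearly to $a$ if there exist $C\ge0$, $r\in(0,1)$ with $\|a_n-a\|\le Cr^n$ for all $n$. *)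

theory Defs
  imports "HOL-Analysis.Analysis"
begin

definition Fix :: "('a \<Rightarrow> 'a) \<Rightarrow> 'a set" where
  "Fix T = {x. T x = x}"

text \<open>Q d g stands for the relocator Q_{d <- g}. Condition (d) with constants in [1,oo)
is rendered as: each Q d g is L-Lipschitz on the whole space for some L >= 1.\<close>
definition fixed_point_relocators ::
  "real set \<Rightarrow> (real \<Rightarrow> 'a \<Rightarrow> 'a) \<Rightarrow> (real \<Rightarrow> real \<Rightarrow> 'a \<Rightarrow> 'a::real_normed_vector) \<Rightarrow> bool" where
  "fixed_point_relocators \<Gamma> T Q \<longleftrightarrow>
     (\<forall>g\<in>\<Gamma>. \<forall>d\<in>\<Gamma>. bij_betw (Q d g) (Fix (T g)) (Fix (T d))) \<and>
     (\<forall>g\<in>\<Gamma>. \<forall>x\<in>Fix (T g). continuous_on \<Gamma> (\<lambda>d. Q d g x)) \<and>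
     (\<forall>g\<in>\<Gamma>. \<forall>d\<in>\<Gamma>. \<forall>e\<in>\<Gamma>. \<forall>x\<in>Fix (T g). Q e d (Q d g x) = Q e g x) \<and>
     (\<forall>g\<in>\<Gamma>. \<forall>d\<in>\<Gamma>. \<exists>L\<ge>1. lipschitz_on L UNIV (Q d g))"

definition R_linear_conv :: "(nat \<Rightarrow> 'a::real_normed_vector) \<Rightarrow> 'a \<Rightarrow> bool" where
  "R_linear_conv a l \<longleftrightarrow> (\<exists>C\<ge>0. \<exists>r. 0 < r \<and> r < 1 \<and> (\<forall>n. norm (a n - l) \<le> C * r ^ n))"

end

theory Submission
  imports Defs
begin

text \<open>By the composition law every iterate is a single relocation of the limit point
  \<open>q = Q \<gamma>s (\<gamma> 0) (c 0)\<close>: \<open>c n = Q (\<gamma> n) \<gamma>s q\<close>, while \<open>Q \<gamma>s \<gamma>s q = q\<close>.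
  Hence \<open>norm (c n - q) \<le> L * \<bar>\<gamma> n - \<gamma>s\<bar>\<close>, where the local Lipschitz hypothesis is
  only needed for the singleton \<open>{(q, \<gamma>s)}\<close>, and R-linear convergence passes from
  \<open>\<gamma>\<close> to \<open>c\<close>.\<close>

lemma fixed_point_relocators_mem_Fix:
  assumes "fixed_point_relocators \<Gamma> T Q" "g \<in> \<Gamma>" "d \<in> \<Gamma>" "x \<in> Fix (T g)"
  shows "Q d g x \<in> Fix (T d)"
  using assms bij_betwE unfolding fixed_point_relocators_def by metis

lemma fixed_point_relocators_comp:
  assumes "fixed_point_relocators \<Gamma> T Q" "g \<in> \<Gamma>" "d \<in> \<Gamma>" "e \<in> \<Gamma>" "x \<in> Fix (T g)"
  shows "Q e d (Q d g x) = Q e g x"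
  using assms unfolding fixed_point_relocators_def by blast

lemma fixed_point_relocators_self:
  assumes Q: "fixed_point_relocators \<Gamma> T Q" and "g \<in> \<Gamma>" "x \<in> Fix (T g)"
  shows "Q g g x = x"
proof -
  have "inj_on (Q g g) (Fix (T g))"
    using Q \<open>g \<in> \<Gamma>\<close> bij_betw_imp_inj_on unfolding fixed_point_relocators_def by blast
  moreover have "Q g g (Q g g x) = Q g g x"
    using fixed_point_relocators_comp[OF Q assms(2,2,2,3)] .
  moreover have "Q g g x \<in> Fix (T g)"
    using fixed_point_relocators_mem_Fix[OF Q assms(2,2,3)] .
  ultimately show ?thesis
    using \<open>x \<in> Fix (T g)\<close> inj_onD by metis
qed

lemma fixed_point_relocators_iterate:
  assumes Q: "fixed_point_relocators \<Gamma> T Q"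
    and "\<And>n. \<gamma> n \<in> \<Gamma>" and "c 0 \<in> Fix (T (\<gamma> 0))"
    and "\<And>n. c (Suc n) = Q (\<gamma> (Suc n)) (\<gamma> n) (c n)"
  shows "c n = Q (\<gamma> n) (\<gamma> 0) (c 0)"
proof (induction n)
  case 0
  show ?case
    using fixed_point_relocators_self[OF Q assms(2,3)] by simp
next
  case (Suc n)
  then show ?case
    using assms(4)[of n] fixed_point_relocators_comp[OF Q assms(2,2,2,3)] by simp
qed

lemma R_linear_conv_dominated:
  assumes "R_linear_conv b m" "L \<ge> 0" "\<And>n. norm (a n - l) \<le> L * norm (b n - m)"
  shows "R_linear_conv a l"
proof -
  obtain C r where "C \<ge> 0" "0 < r" "r < 1" and b: "\<And>n. norm (b n - m) \<le> C * r ^ n"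
    using assms(1) unfolding R_linear_conv_def by blast
  have "norm (a n - l) \<le> (L * C) * r ^ n" for n
  proof -
    have "norm (a n - l) \<le> L * norm (b n - m)" by (fact assms(3))
    also have "\<dots> \<le> L * (C * r ^ n)" using b assms(2) by (rule mult_left_mono)
    finally show ?thesis by simp
  qed
  then show ?thesis
    unfolding R_linear_conv_def using \<open>C \<ge> 0\<close> \<open>0 < r\<close> \<open>r < 1\<close> assms(2)
    by (intro exI[of _ "L * C"] exI[of _ r]) auto
qed

theorem lemma3p5:
  fixes \<Gamma> :: "real set"
    and T :: "real \<Rightarrow> 'a::{real_inner, complete_space} \<Rightarrow> 'a"
    and Q :: "real \<Rightarrow> real \<Rightarrow> 'a \<Rightarrow> 'a"
    and \<gamma> :: "nat \<Rightarrow> real" and \<gamma>s :: real and c :: "nat \<Rightarrow> 'a"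
  assumes "\<Gamma> \<noteq> {}" and "\<Gamma> \<subseteq> {0<..}"
    and "\<forall>g\<in>\<Gamma>. Fix (T g) \<noteq> {}"
    and "fixed_point_relocators \<Gamma> T Q"
    and "\<forall>S. S \<subseteq> {(x, g). g \<in> \<Gamma> \<and> x \<in> Fix (T g)} \<and> bounded S \<longrightarrow>
           (\<exists>L>0. \<forall>d\<in>\<Gamma>. \<forall>(x, g)\<in>S. norm (Q d g x - Q g g x) \<le> L * \<bar>d - g\<bar>)"
    and "\<forall>n. \<gamma> n \<in> \<Gamma>" and "\<gamma>s \<in> \<Gamma>" and "R_linear_conv \<gamma> \<gamma>s"
    and "c 0 \<in> Fix (T (\<gamma> 0))"
    and "\<forall>n. c (Suc n) = Q (\<gamma> (Suc n)) (\<gamma> n) (c n)"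
  shows "(\<forall>n. c n \<in> Fix (T (\<gamma> n))) \<and> Q \<gamma>s (\<gamma> 0) (c 0) \<in> Fix (T \<gamma>s) \<and>
         R_linear_conv c (Q \<gamma>s (\<gamma> 0) (c 0))"
proof -
  note Q = assms(4) and \<gamma> = assms(6)[rule_format] and \<gamma>s = assms(7) and c0 = assms(9)
  define q where "q = Q \<gamma>s (\<gamma> 0) (c 0)"
  have c_eq: "c n = Q (\<gamma> n) (\<gamma> 0) (c 0)" for n
    by (rule fixed_point_relocators_iterate[OF Q]) (use \<gamma> c0 assms(10) in auto)
  have c_Fix: "c n \<in> Fix (T (\<gamma> n))" for n
    unfolding c_eq[of n] using fixed_point_relocators_mem_Fix[OF Q \<gamma> \<gamma> c0] .
  have q_Fix: "q \<in> Fix (T \<gamma>s)"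
    unfolding q_def using fixed_point_relocators_mem_Fix[OF Q \<gamma> \<gamma>s c0] .
  have c_from_q: "c n = Q (\<gamma> n) \<gamma>s q" for n
    unfolding c_eq[of n] q_def using fixed_point_relocators_comp[OF Q \<gamma> \<gamma>s \<gamma> c0] by simp
  obtain L where "L > 0" and L: "\<forall>d\<in>\<Gamma>. norm (Q d \<gamma>s q - Q \<gamma>s \<gamma>s q) \<le> L * \<bar>d - \<gamma>s\<bar>"
    using assms(5)[rule_format, of "{(q, \<gamma>s)}"] q_Fix \<gamma>s by auto
  have "norm (c n - q) \<le> L * norm (\<gamma> n - \<gamma>s)" for n
    using L \<gamma> fixed_point_relocators_self[OF Q \<gamma>s q_Fix] by (simp add: c_from_q)
  then have "R_linear_conv c q"
    using \<open>L > 0\<close> by (intro R_linear_conv_dominated[OF assms(8), of L]) auto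
  then show ?thesis
    using c_Fix q_Fix q_def by blast
qed

end
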